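(* Let $0<\alpha<1$ and for integers $n\ge 2$ define $w_k^{(\alpha)}=(-1)^k\binom{\alpha}{k}$, $$W_n^0=\sum_{k=0}^{n-1}w_k^{(\alpha)},\qquad W_n^1=nW_n^0-\sum_{k=0}^{n-1}k\,w_k^{(\alpha)}-\frac{(n-\alpha/2)^{1-\alpha}}{\Gamma(2-\alpha)}.$$ Then, as $n\to\infty$, $$W_n^0=\frac{1}{\Gamma(1-\alpha)n^\alpha}-\frac{\alpha+1}{2\Gamma(-\alpha)n^{1+\alpha}}+\frac{(2+\alpha)(1+3\alpha)}{24\,\Gamma(-1-\alpha)n^{2+\alpha}}+O\!\left(\frac{1}{n^{3+\alpha}}\right),$$ $$W_n^1=\frac{\alpha-2}{24\,\Gamma(-\alpha)n^{1+\alpha}}+O\!\left(\frac{1}{n^{2+\alpha}}\right).$$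
   Context: Binomial coefficients with real upper argument are $\binom{a}{k}=\frac{a(a-1)\cdots(a-k+1)}{k!}$, $\binom{a}{0}=1$. $\Gamma$ is the Euler gamma function, extended to negative non-integer arguments by analytic continuation. *)

theory Defs
  imports "HOL-Analysis.Analysis" "HOL-Library.Landau_Symbols"
begin

definition wcoef :: "real \<Rightarrow> nat \<Rightarrow> real" where
  "wcoef \<alpha> k = (-1) ^ k * (\<alpha> gchoose k)"

definition W0 :: "real \<Rightarrow> nat \<Rightarrow> real" where
  "W0 \<alpha> n = (\<Sum>k<n. wcoef \<alpha> k)"

definition W1 :: "real \<Rightarrow> nat \<Rightarrow> real" where
  "W1 \<alpha> n = real n * W0 \<alpha> n - (\<Sum>k<n. real k * wcoef \<alpha> k)
      - (real n - \<alpha> / 2) powr (1 - \<alpha>) / Gamma (2 - \<alpha>)"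

end

theory Submission
  imports Defs "HOL-Real_Asymp.Real_Asymp"
begin

text \<open>
  Since \<open>W0 a (n + 1) = (-1)^n ((a - 1) gchoose n)\<close>, we have \<open>n W0 a (n + 1) = (n - a) W0 a n\<close>
  and, by the gamma asymptotics of binomial coefficients, \<open>\<Gamma>(1 - a) n^a W0 a n \<longrightarrow> 1\<close>.
  Dividing \<open>\<Gamma>(1 - a) n^a W0 a n\<close> by the truncated series \<open>W0_series a n\<close> gives a sequence whose
  consecutive ratios are \<open>1 + O(n^-4)\<close>; as it converges to 1, telescoping shows that it does so
  at rate \<open>O(n^-3)\<close>, which is the expansion of \<open>W0\<close>. The identity
  \<open>n W0 a n - (\<Sum>k<n. k w_k) = (n - a) W0 a n / (1 - a)\<close> reduces \<open>W1\<close> to \<open>W0\<close>, and its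
  expansion follows from that of \<open>W0\<close> by expanding an elementary remainder.
\<close>

lemma inverse_power_Suc_le_diff:
  fixes x :: real
  assumes "1 < x" "0 < k"
  shows "1 / x ^ Suc k \<le> 1 / (x - 1) ^ k - 1 / x ^ k"
proof -
  define j where "j = x - 1"
  have j: "0 < j" "x = j + 1" using assms(1) by (auto simp: j_def)
  have "x * j ^ (k - 1) \<le> x * x ^ (k - 1)"
    using j by (intro mult_left_mono power_mono) auto
  also have "\<dots> = x ^ k"
    using assms(2) by (simp add: power_eq_if)
  finally have "j ^ (k - 1) \<le> x ^ k - j ^ k"
    using assms(2) j by (simp add: power_eq_if algebra_simps)
  have "j ^ k = j * j ^ (k - 1)"
    using assms(2) by (simp add: power_eq_if)
  also have "\<dots> \<le> x * j ^ (k - 1)"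
    using j by (intro mult_right_mono) auto
  also have "\<dots> \<le> x * (x ^ k - j ^ k)"
    using \<open>j ^ (k - 1) \<le> x ^ k - j ^ k\<close> j by (intro mult_left_mono) auto
  finally have "j ^ k \<le> x * (x ^ k - j ^ k)" .
  then show ?thesis
    using j by (simp add: divide_simps mult.commute)
qed

lemma abs_diff_limit_le_of_increments:
  fixes u :: "nat \<Rightarrow> real"
  assumes lim: "u \<longlonglongrightarrow> L" and "0 < k" "2 \<le> N" "0 \<le> c"
    and incr: "\<And>n. N \<le> n \<Longrightarrow> \<bar>u (Suc n) - u n\<bar> \<le> c / real n ^ Suc k"
    and "N \<le> n"
  shows "\<bar>u n - L\<bar> \<le> c / (real n - 1) ^ k"
proof -
  have telescope: "\<bar>u m - u n\<bar> \<le> c * (1 / (real n - 1) ^ k - 1 / (real m - 1) ^ k)"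
    if "n \<le> m" for m
    using that
  proof (induction rule: dec_induct)
    case base
    then show ?case by simp
  next
    case (step m)
    have "c / real m ^ Suc k \<le> c * (1 / (real m - 1) ^ k - 1 / real m ^ k)"
      using inverse_power_Suc_le_diff[of "real m" k] step.hyps \<open>0 < k\<close> \<open>2 \<le> N\<close> \<open>N \<le> n\<close> \<open>0 \<le> c\<close>
      by (simp add: mult_left_mono divide_inverse)
    moreover have "\<bar>u (Suc m) - u m\<bar> \<le> c / real m ^ Suc k"
      using incr step.hyps \<open>N \<le> n\<close> by simp
    moreover have "\<bar>u (Suc m) - u n\<bar> \<le> \<bar>u (Suc m) - u m\<bar> + \<bar>u m - u n\<bar>"
      using abs_triangle_ineq[of "u (Suc m) - u m" "u m - u n"] by simp
    ultimately show ?case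
      using step.IH by (simp add: algebra_simps)
  qed
  have "\<bar>u m - u n\<bar> \<le> c / (real n - 1) ^ k" if "n \<le> m" for m
  proof -
    have "0 \<le> c / (real m - 1) ^ k"
      using that \<open>2 \<le> N\<close> \<open>N \<le> n\<close> \<open>0 \<le> c\<close> by simp
    then show ?thesis
      using telescope[OF that] by (simp add: algebra_simps)
  qed
  moreover have "(\<lambda>m. \<bar>u m - u n\<bar>) \<longlonglongrightarrow> \<bar>L - u n\<bar>"
    by (intro tendsto_intros lim)
  ultimately have "\<bar>L - u n\<bar> \<le> c / (real n - 1) ^ k"
    by (intro LIMSEQ_le_const2) auto
  then show ?thesis
    by (simp add: abs_minus_commute)
qed

lemma bigo_diff_limit_of_increments:
  fixes u :: "nat \<Rightarrow> real"
  assumes lim: "u \<longlonglongrightarrow> L" and "0 < k"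
    and "(\<lambda>n. u (Suc n) - u n) \<in> O(\<lambda>n. 1 / real n ^ Suc k)"
  shows "(\<lambda>n. u n - L) \<in> O(\<lambda>n. 1 / real n ^ k)"
proof -
  obtain c where "c > 0" and "eventually (\<lambda>n. norm (u (Suc n) - u n) \<le> c * norm (1 / real n ^ Suc k)) sequentially"
    using assms(3) by (rule landau_o.bigE)
  then obtain N0 where N0: "\<And>n. N0 \<le> n \<Longrightarrow> \<bar>u (Suc n) - u n\<bar> \<le> c / real n ^ Suc k"
    by (auto simp: eventually_sequentially)
  have bound: "norm (u n - L) \<le> 2 ^ k * c * norm (1 / real n ^ k)" if "max N0 2 \<le> n" for n
  proof -
    have n: "2 \<le> real n" using that by simp
    have "\<bar>u n - L\<bar> \<le> c / (real n - 1) ^ k"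
      by (rule abs_diff_limit_le_of_increments[OF lim \<open>0 < k\<close> _ _ N0 that])
         (use \<open>c > 0\<close> in auto)
    also have "\<dots> \<le> c / (real n / 2) ^ k"
      using n \<open>c > 0\<close> by (intro divide_left_mono power_mono mult_pos_pos) auto
    finally show ?thesis
      using n by (simp add: power_divide field_simps)
  qed
  show ?thesis
  proof (rule bigoI)
    show "eventually (\<lambda>n. norm (u n - L) \<le> 2 ^ k * c * norm (1 / real n ^ k)) sequentially"
      using eventually_ge_at_top[of "max N0 2"] by eventually_elim (rule bound)
  qed
qed

lemma bigo_diff_limit_of_ratios:
  fixes s e :: "nat \<Rightarrow> real"
  assumes lim: "s \<longlonglongrightarrow> L" and "0 < k"
    and e: "e \<in> O(\<lambda>n. 1 / real n ^ Suc k)"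
    and ratio: "eventually (\<lambda>n. s (Suc n) = s n * (1 + e n)) sequentially"
  shows "(\<lambda>n. s n - L) \<in> O(\<lambda>n. 1 / real n ^ k)"
proof (rule bigo_diff_limit_of_increments[OF lim \<open>0 < k\<close>])
  have "s \<in> O(\<lambda>_. 1)"
    using lim by (intro bigoI_tendsto[where c = L]) auto
  from landau_o.big.mult[OF this e]
  have "(\<lambda>n. s n * e n) \<in> O(\<lambda>n. 1 / real n ^ Suc k)"
    by simp
  moreover have "eventually (\<lambda>n. s n * e n = s (Suc n) - s n) sequentially"
    using ratio by eventually_elim (simp add: algebra_simps)
  ultimately show "(\<lambda>n. s (Suc n) - s n) \<in> O(\<lambda>n. 1 / real n ^ Suc k)"
    by (rule landau_o.big.in_cong[THEN iffD1, rotated])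
qed

lemma Gamma_shifts_of_fraction:
  fixes a :: real
  assumes "0 < a" "a < 1"
  shows "Gamma (- a) = - Gamma (1 - a) / a"
    and "Gamma (- 1 - a) = Gamma (1 - a) / (a * (1 + a))"
    and "Gamma (2 - a) = (1 - a) * Gamma (1 - a)"
proof -
  have "a \<notin> \<nat>"
    using assms by (auto elim!: Nats_cases)
  have "1 + a \<notin> \<nat>"
  proof
    assume "1 + a \<in> \<nat>"
    then obtain m where "1 + a = real m"
      by (auto elim: Nats_cases)
    with assms have "1 < real m" "real m < 2"
      by linarith+
    then show False
      by simp
  qed
  with \<open>a \<notin> \<nat>\<close> have "- a \<notin> \<int>\<^sub>\<le>\<^sub>0" "- 1 - a \<notin> \<int>\<^sub>\<le>\<^sub>0"
    using uminus_in_nonpos_Ints_iff[of a] uminus_in_nonpos_Ints_iff[of "1 + a"] by auto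
  from Gamma_plus1[OF this(1)] Gamma_plus1[OF this(2)]
  have shift1: "Gamma (1 - a) = - a * Gamma (- a)"
    and shift2: "Gamma (- a) = (- 1 - a) * Gamma (- 1 - a)"
    by (simp_all add: algebra_simps)
  show "Gamma (- a) = - Gamma (1 - a) / a"
    unfolding shift1 using assms by simp
  have "Gamma (1 - a) = a * (1 + a) * Gamma (- 1 - a)"
    unfolding shift1 shift2 by (simp add: algebra_simps)
  then show "Gamma (- 1 - a) = Gamma (1 - a) / (a * (1 + a))"
    using assms by simp
  have "1 - a \<notin> \<int>\<^sub>\<le>\<^sub>0"
    using assms by auto
  from Gamma_plus1[OF this] show "Gamma (2 - a) = (1 - a) * Gamma (1 - a)"
    by (simp add: algebra_simps)
qed

lemma W0_Suc_eq_gchoose: "W0 a (Suc n) = (-1) ^ n * ((a - 1) gchoose n)"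
  using gbinomial_sum_lower_neg[of a n]
  by (simp add: W0_def wcoef_def lessThan_Suc_atMost mult.commute)

lemma W0_Suc_ratio: "real n * W0 a (Suc n) = (real n - a) * W0 a n"
proof (cases n)
  case 0
  then show ?thesis by (simp add: W0_def)
next
  case (Suc m)
  have "real (Suc m) * ((a - 1) gchoose Suc m) = (a - 1 - real m) * ((a - 1) gchoose m)"
    using gbinomial_mult_1[of "a - 1" m] by (simp add: algebra_simps)
  then have "real (Suc m) * W0 a (Suc (Suc m)) = (-1) ^ Suc m * ((a - 1 - real m) * ((a - 1) gchoose m))"
    unfolding W0_Suc_eq_gchoose by (simp only: mult.left_commute[of "real (Suc m)"])
  then show ?thesis
    unfolding Suc by (simp add: W0_Suc_eq_gchoose algebra_simps)
qed

lemma W0_moment_identity: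
  assumes "a \<noteq> 1"
  shows "real n * W0 a n - (\<Sum>k<n. real k * wcoef a k) = (real n - a) * W0 a n / (1 - a)"
proof (induction n)
  case 0
  then show ?case by (simp add: W0_def)
next
  case (Suc n)
  have "real (Suc n) * W0 a (Suc n) - (\<Sum>k<Suc n. real k * wcoef a k)
      = real n * W0 a n - (\<Sum>k<n. real k * wcoef a k) + W0 a (Suc n)"
    by (simp add: W0_def algebra_simps)
  also have "\<dots> = (real n - a) * W0 a n / (1 - a) + W0 a (Suc n)"
    by (simp only: Suc.IH)
  also have "\<dots> = (real (Suc n) - a) * W0 a (Suc n) / (1 - a)"
    using W0_Suc_ratio[of n a] assms by (simp add: field_simps)
  finally show ?case .
qed

lemma W0_scaled_tendsto: "(\<lambda>n. real n powr a * W0 a n) \<longlonglongrightarrow> inverse (Gamma (1 - a))"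
proof -
  have "(\<lambda>n. ((a - 1) gchoose n) / ((-1) ^ n / exp ((a - 1 + 1) * ln (real n))))
      \<longlonglongrightarrow> inverse (Gamma (1 - a))"
    using gbinomial_asymptotic[of "a - 1"] by simp
  moreover have "((a - 1) gchoose n) / ((-1) ^ n / exp ((a - 1 + 1) * ln (real n)))
      = real n powr a * W0 a (Suc n)" if "n > 0" for n
    using that by (simp add: W0_Suc_eq_gchoose powr_def field_simps)
  ultimately have "(\<lambda>n. real n powr a * W0 a (Suc n)) \<longlonglongrightarrow> inverse (Gamma (1 - a))"
    by (rule Lim_transform_eventually[OF _ eventually_mono[OF eventually_gt_at_top[of 0]]]) auto
  moreover have "(\<lambda>n::nat. (real (Suc n) / real n) powr a) \<longlonglongrightarrow> 1"
    by real_asymp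
  ultimately have "(\<lambda>n. real n powr a * W0 a (Suc n) * (real (Suc n) / real n) powr a)
      \<longlonglongrightarrow> inverse (Gamma (1 - a)) * 1"
    by (rule tendsto_mult)
  then have "(\<lambda>n. real n powr a * W0 a (Suc n) * (real (Suc n) / real n) powr a)
      \<longlonglongrightarrow> inverse (Gamma (1 - a))"
    by simp
  then have "(\<lambda>n. real (Suc n) powr a * W0 a (Suc n)) \<longlonglongrightarrow> inverse (Gamma (1 - a))"
    by (rule Lim_transform_eventually[OF _ eventually_mono[OF eventually_gt_at_top[of 0]]])
       (auto simp: powr_divide)
  then show ?thesis
    by (rule LIMSEQ_imp_Suc)
qed

text \<open>The first three terms of the expansion of \<open>n^a \<Gamma>(n - a) / \<Gamma>(n) = \<Gamma>(1 - a) n^a W0 a n\<close>.\<close>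

definition W0_series :: "real \<Rightarrow> nat \<Rightarrow> real" where
  "W0_series a n = 1 + a * (a + 1) / (2 * real n)
     + a * (a + 1) * (a + 2) * (3 * a + 1) / (24 * real n ^ 2)"

lemma W0_series_pos: "0 \<le> a \<Longrightarrow> 0 < W0_series a n"
  unfolding W0_series_def by (intro add_pos_nonneg) auto

lemma W0_scaled_expansion:
  assumes "0 < a" "a < 1"
  shows "(\<lambda>n. Gamma (1 - a) * real n powr a * W0 a n - W0_series a n) \<in> O(\<lambda>n. 1 / real n ^ 3)"
proof -
  define s where "s = (\<lambda>n. Gamma (1 - a) * real n powr a * W0 a n / W0_series a n)"
  define e where "e n = (real n - a) / real n * (real (Suc n) / real n) powr a
      * W0_series a n / W0_series a (Suc n) - 1" for n
  have ser_pos: "0 < W0_series a n" for n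
    using assms by (simp add: W0_series_pos)
  have "W0_series a \<longlonglongrightarrow> 1"
    unfolding W0_series_def by real_asymp
  with W0_scaled_tendsto[of a]
  have "(\<lambda>n. Gamma (1 - a) * (real n powr a * W0 a n) / W0_series a n)
      \<longlonglongrightarrow> Gamma (1 - a) * inverse (Gamma (1 - a)) / 1"
    by (intro tendsto_intros) simp_all
  moreover have "Gamma (1 - a) > 0"
    using assms by simp
  ultimately have "s \<longlonglongrightarrow> 1"
    by (simp add: s_def mult.assoc)
  moreover have "e \<in> O(\<lambda>n. 1 / real n ^ Suc 3)"
    unfolding e_def W0_series_def of_nat_Suc
    using assms by (real_asymp simp add: field_simps power2_eq_square power3_eq_cube)
  moreover have "eventually (\<lambda>n. s (Suc n) = s n * (1 + e n)) sequentially"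
    using eventually_ge_at_top[of 1]
  proof eventually_elim
    case (elim n)
    have "real (Suc n) powr a = real n powr a * (real (Suc n) / real n) powr a"
      using elim by (simp add: powr_divide)
    moreover have "W0 a (Suc n) = (real n - a) / real n * W0 a n"
      using W0_Suc_ratio[of n a] elim by (simp add: field_simps)
    ultimately have "s (Suc n) = Gamma (1 - a) * (real n powr a * (real (Suc n) / real n) powr a)
        * ((real n - a) / real n * W0 a n) / W0_series a (Suc n)"
      by (simp only: s_def)
    also have "\<dots> = s n * (1 + e n)"
      using ser_pos[of n] ser_pos[of "Suc n"] elim by (simp add: s_def e_def field_simps)
    finally show ?case .
  qed
  ultimately have "(\<lambda>n. s n - 1) \<in> O(\<lambda>n. 1 / real n ^ 3)"
    by (intro bigo_diff_limit_of_ratios) auto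
  moreover have "W0_series a \<in> O(\<lambda>_. 1)"
    unfolding W0_series_def by real_asymp
  ultimately have "(\<lambda>n. W0_series a n * (s n - 1)) \<in> O(\<lambda>n. 1 * (1 / real n ^ 3))"
    by (intro landau_o.big.mult)
  moreover have "W0_series a n * (s n - 1) = Gamma (1 - a) * real n powr a * W0 a n - W0_series a n" for n
    using ser_pos[of n] by (simp add: s_def field_simps)
  ultimately show ?thesis
    by simp
qed

lemma W0_asymptotic:
  assumes "0 < a" "a < 1"
  shows "(\<lambda>n. W0 a n - (1 / (Gamma (1 - a) * real n powr a)
            - (a + 1) / (2 * Gamma (- a) * real n powr (1 + a))
            + (2 + a) * (1 + 3 * a) / (24 * Gamma (- 1 - a) * real n powr (2 + a))))
         \<in> O(\<lambda>n. 1 / real n powr (3 + a))"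
proof -
  define G where "G = Gamma (1 - a)"
  have "G > 0"
    using assms by (simp add: G_def)
  have "eventually (\<lambda>n. G * real n powr a \<noteq> 0) sequentially"
    by (rule eventually_mono[OF eventually_gt_at_top[of 0]]) (use \<open>G > 0\<close> in simp)
  with W0_scaled_expansion[OF assms]
  have "(\<lambda>n. (G * real n powr a * W0 a n - W0_series a n) / (G * real n powr a))
      \<in> O(\<lambda>n. 1 / real n ^ 3 / (G * real n powr a))"
    unfolding G_def by (intro landau_o.big.divide_right)
  also have "(\<lambda>n. 1 / real n ^ 3 / (G * real n powr a)) \<in> O(\<lambda>n. 1 / real n powr (3 + a))"
    using \<open>G > 0\<close> by real_asymp
  finally have error_bound: "(\<lambda>n. (G * real n powr a * W0 a n - W0_series a n) / (G * real n powr a))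
      \<in> O(\<lambda>n. 1 / real n powr (3 + a))" .
  have "eventually (\<lambda>n. (G * real n powr a * W0 a n - W0_series a n) / (G * real n powr a)
      = W0 a n - (1 / (G * real n powr a) - (a + 1) / (2 * Gamma (- a) * real n powr (1 + a))
            + (2 + a) * (1 + 3 * a) / (24 * Gamma (- 1 - a) * real n powr (2 + a)))) sequentially"
    using eventually_gt_at_top[of 0]
  proof eventually_elim
    case (elim n)
    then show ?case
      using \<open>G > 0\<close> assms
      by (simp add: Gamma_shifts_of_fraction G_def[symmetric] W0_series_def powr_add
          field_simps power2_eq_square)
  qed
  from landau_o.big.in_cong[OF this] error_bound show ?thesis
    unfolding G_def by simp
qed

lemma W1_error_eq:
  assumes "0 < a" "a < 1" "0 < n"
  shows "W1 a n - (a - 2) / (24 * Gamma (- a) * real n powr (1 + a))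
    = ((real n - a) * Gamma (1 - a) * W0 a n - (real n - a / 2) powr (1 - a)
        + a * (1 - a) * (a - 2) / (24 * real n powr (1 + a))) / ((1 - a) * Gamma (1 - a))"
proof -
  define G where "G = Gamma (1 - a)"
  define P where "P = (real n - a / 2) powr (1 - a)"
  have "G > 0"
    using assms by (simp add: G_def)
  have "W1 a n = (real n - a) * W0 a n / (1 - a) - P / ((1 - a) * G)"
    using W0_moment_identity[of a n] assms
    by (simp add: W1_def Gamma_shifts_of_fraction G_def P_def)
  also have "\<dots> = ((real n - a) * G * W0 a n - P) / ((1 - a) * G)"
    using \<open>G > 0\<close> assms by (simp add: diff_divide_distrib)
  finally have W1_eq: "W1 a n = ((real n - a) * G * W0 a n - P) / ((1 - a) * G)" .
  have "real n powr (1 + a) > 0"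
    using assms by simp
  then have "a * (1 - a) * (a - 2) / (24 * real n powr (1 + a)) / ((1 - a) * G)
      = - ((a - 2) / (24 * Gamma (- a) * real n powr (1 + a)))"
    using \<open>G > 0\<close> assms by (simp add: Gamma_shifts_of_fraction G_def[symmetric] field_simps)
  then show ?thesis
    unfolding W1_eq G_def[symmetric] P_def[symmetric] add_divide_distrib by simp
qed

text \<open>The shift \<open>a / 2\<close> in \<open>W1\<close> is exactly what cancels the terms of order \<open>n^-a\<close> here.\<close>

lemma W1_series_remainder:
  assumes "0 < a" "a < 1"
  shows "(\<lambda>n. (real n - a) * W0_series a n / real n powr a - (real n - a / 2) powr (1 - a)
            + a * (1 - a) * (a - 2) / (24 * real n powr (1 + a)))
         \<in> O(\<lambda>n. 1 / real n powr (2 + a))"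
  unfolding W0_series_def using assms
  by (real_asymp simp add: field_simps power2_eq_square power3_eq_cube)

lemma W1_asymptotic:
  assumes "0 < a" "a < 1"
  shows "(\<lambda>n. W1 a n - (a - 2) / (24 * Gamma (- a) * real n powr (1 + a)))
         \<in> O(\<lambda>n. 1 / real n powr (2 + a))"
proof -
  define G where "G = Gamma (1 - a)"
  have "G > 0"
    using assms by (simp add: G_def)
  have "(\<lambda>n. (real n - a) / real n powr a) \<in> O(\<lambda>n. real n powr (1 - a))"
    by real_asymp
  from landau_o.big.mult[OF this W0_scaled_expansion[OF assms]]
  have "(\<lambda>n. (real n - a) / real n powr a * (G * real n powr a * W0 a n - W0_series a n))
      \<in> O(\<lambda>n. real n powr (1 - a) * (1 / real n ^ 3))"
    unfolding G_def .
  also have "(\<lambda>n. real n powr (1 - a) * (1 / real n ^ 3)) \<in> O(\<lambda>n. 1 / real n powr (2 + a))"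
    by real_asymp
  finally have "(\<lambda>n. (real n - a) / real n powr a * (G * real n powr a * W0 a n - W0_series a n))
      \<in> O(\<lambda>n. 1 / real n powr (2 + a))" .
  from sum_in_bigo(1)[OF this W1_series_remainder[OF assms]]
  have error_bound: "(\<lambda>n. ((real n - a) / real n powr a * (G * real n powr a * W0 a n - W0_series a n)
        + ((real n - a) * W0_series a n / real n powr a - (real n - a / 2) powr (1 - a)
        + a * (1 - a) * (a - 2) / (24 * real n powr (1 + a)))) / ((1 - a) * G))
      \<in> O(\<lambda>n. 1 / real n powr (2 + a))"
    using \<open>G > 0\<close> assms by simp
  moreover have "eventually (\<lambda>n. ((real n - a) / real n powr a * (G * real n powr a * W0 a n - W0_series a n)
        + ((real n - a) * W0_series a n / real n powr a - (real n - a / 2) powr (1 - a)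
        + a * (1 - a) * (a - 2) / (24 * real n powr (1 + a)))) / ((1 - a) * G)
      = W1 a n - (a - 2) / (24 * Gamma (- a) * real n powr (1 + a))) sequentially"
    using eventually_gt_at_top[of 0]
  proof eventually_elim
    case (elim n)
    have "(real n - a) / real n powr a * (G * real n powr a * W0 a n - W0_series a n)
        + (real n - a) * W0_series a n / real n powr a = (real n - a) * G * W0 a n"
      using elim by (simp add: field_simps)
    then show ?case
      unfolding W1_error_eq[OF assms elim] G_def[symmetric]
      by (intro arg_cong[where f = "\<lambda>t. t / ((1 - a) * G)"]) linarith
  qed
  from landau_o.big.in_cong[OF this] error_bound show ?thesis
    by simp
qed

theorem lemma2:
  fixes \<alpha> :: real
  assumes "0 < \<alpha>" and "\<alpha> < 1"
  shows "((\<lambda>n. W0 \<alpha> n - (1 / (Gamma (1 - \<alpha>) * real n powr \<alpha>)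
              - (\<alpha> + 1) / (2 * Gamma (- \<alpha>) * real n powr (1 + \<alpha>))
              + (2 + \<alpha>) * (1 + 3 * \<alpha>) / (24 * Gamma (- 1 - \<alpha>) * real n powr (2 + \<alpha>))))
           \<in> O(\<lambda>n. 1 / real n powr (3 + \<alpha>))) \<and>
         ((\<lambda>n. W1 \<alpha> n - (\<alpha> - 2) / (24 * Gamma (- \<alpha>) * real n powr (1 + \<alpha>)))
           \<in> O(\<lambda>n. 1 / real n powr (2 + \<alpha>)))"
  using W0_asymptotic[OF assms] W1_asymptotic[OF assms] by blast

end
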